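(* Let $m,n$ be positive integers and $x>2$ real. Define $\alpha_j>0$ ($1\le j\le n$) and $\beta_k>0$ ($1\le k\le m$) by $$\cosh\alpha_j+\cos\frac{\pi j}{n+1}=x=\cosh\beta_k+\cos\frac{\pi k}{m+1}.$$ Then $$\prod_{j=1}^n\frac{\sinh\big((m+1)\alpha_j\big)}{\sinh\alpha_j}=\prod_{k=1}^m\frac{\sinh\big((n+1)\beta_k\big)}{\sinh\beta_k}.$$ *)

theory Defs
  imports Complex_Main
begin

end

theory Submission
  imports Defs "HOL-Computational_Algebra.Polynomial"
begin

text \<open>
  With the Chebyshev polynomial of the second kind \<open>U\<^sub>m\<close>, whose roots are
  \<open>cos (\<pi> k / (m+1))\<close> for \<open>1 \<le> k \<le> m\<close>, one has
  \<open>sinh ((m+1) a) / sinh a = U\<^sub>m (cosh a) = 2\<^sup>m \<Prod>\<^sub>k (cosh a - cos (\<pi> k / (m+1)))\<close>.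
  Substituting \<open>cosh \<alpha>\<^sub>j = x - cos (\<pi> j / (n+1))\<close> turns both sides of the theorem into
  \<open>2\<^sup>m\<^sup>n \<Prod>\<^sub>j \<Prod>\<^sub>k (x - cos (\<pi> j / (n+1)) - cos (\<pi> k / (m+1)))\<close>, which is symmetric in
  \<open>(m, n)\<close>.
\<close>

fun chebyshev_U :: "nat \<Rightarrow> 'a::comm_ring_1 poly" where
  "chebyshev_U 0 = 1"
| "chebyshev_U (Suc 0) = [:0, 2:]"
| "chebyshev_U (Suc (Suc n)) = [:0, 2:] * chebyshev_U (Suc n) - chebyshev_U n"

lemma chebyshev_U_cosh: "poly (chebyshev_U m) (cosh a) * sinh a = sinh (real (m + 1) * a)"
proof (induction m rule: chebyshev_U.induct)
  case 1
  then show ?case by simp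
next
  case 2
  then show ?case by (simp add: sinh_double)
next
  case (3 n)
  have "sinh (real (n + 3) * a) + sinh (real (n + 1) * a)
      = sinh (real (n + 2) * a + a) + sinh (real (n + 2) * a - a)"
    by (simp add: algebra_simps)
  also have "\<dots> = 2 * cosh a * sinh (real (n + 2) * a)"
    unfolding sinh_add sinh_diff by (simp add: algebra_simps)
  finally show ?case using 3 by (simp add: algebra_simps)
qed

lemma chebyshev_U_cos: "poly (chebyshev_U m) (cos a) * sin a = sin (real (m + 1) * a)"
proof (induction m rule: chebyshev_U.induct)
  case 1
  then show ?case by simp
next
  case 2
  then show ?case by (simp add: sin_double)
next
  case (3 n)
  have "sin (real (n + 3) * a) + sin (real (n + 1) * a)
      = sin (real (n + 2) * a + a) + sin (real (n + 2) * a - a)"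
    by (simp add: algebra_simps)
  also have "\<dots> = 2 * cos a * sin (real (n + 2) * a)"
    unfolding sin_add sin_diff by (simp add: algebra_simps)
  finally show ?case using 3 by (simp add: algebra_simps)
qed

lemma degree_chebyshev_U_le_coeff:
  "degree (chebyshev_U m :: 'a::comm_ring_1 poly) \<le> m \<and> coeff (chebyshev_U m :: 'a poly) m = 2 ^ m"
proof (induction m rule: chebyshev_U.induct)
  case 1
  then show ?case by simp
next
  case 2
  then show ?case by simp
next
  case (3 n)
  have "degree ([:0, 2:] * chebyshev_U (Suc n) :: 'a poly)
      \<le> Suc (degree (smult 2 (chebyshev_U (Suc n) :: 'a poly)))"
    by (simp add: mult_pCons_left degree_pCons_le)
  also have "\<dots> \<le> Suc (Suc n)"
    using 3 degree_smult_le[of 2 "chebyshev_U (Suc n) :: 'a poly"] by simp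
  finally have "degree ([:0, 2:] * chebyshev_U (Suc n) :: 'a poly) \<le> Suc (Suc n)" .
  moreover have "degree (chebyshev_U n :: 'a poly) \<le> Suc (Suc n)"
    using 3 by simp
  ultimately have "degree (chebyshev_U (Suc (Suc n)) :: 'a poly) \<le> Suc (Suc n)"
    unfolding chebyshev_U.simps by (rule degree_diff_le)
  moreover have "coeff (chebyshev_U n :: 'a poly) (Suc (Suc n)) = 0"
    using 3 by (intro coeff_eq_0) simp
  ultimately show ?case
    using 3 by (simp add: mult_pCons_left)
qed

lemma degree_chebyshev_U_le: "degree (chebyshev_U m :: 'a::comm_ring_1 poly) \<le> m"
  using degree_chebyshev_U_le_coeff by blast

lemma coeff_chebyshev_U_top: "coeff (chebyshev_U m :: 'a::comm_ring_1 poly) m = 2 ^ m"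
  using degree_chebyshev_U_le_coeff by blast

lemma inj_on_cos_chebyshev_nodes: "inj_on (\<lambda>k. cos (pi * real k / real (m + 1))) {1..m}"
proof (rule inj_onI)
  fix k l assume "k \<in> {1..m}" "l \<in> {1..m}"
    and eq: "cos (pi * real k / real (m + 1)) = cos (pi * real l / real (m + 1))"
  then have "pi * real k / real (m + 1) = pi * real l / real (m + 1)"
    using cos_inj_pi[OF _ _ _ _ eq] by (simp add: divide_le_eq)
  then show "k = l" by simp
qed

lemma chebyshev_U_root:
  assumes "k \<in> {1..m}"
  shows "poly (chebyshev_U m) (cos (pi * real k / real (m + 1))) = 0"
proof -
  define t where "t = pi * real k / real (m + 1)"
  have "0 < t" "t < pi"
    using assms by (auto simp: t_def divide_less_eq)
  then have "sin t \<noteq> 0"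
    using sin_gt_zero by fastforce
  moreover have "sin (real (m + 1) * t) = 0"
    by (simp add: t_def sin_npi mult.commute)
  ultimately show ?thesis
    using chebyshev_U_cos[of m t] by (simp add: t_def)
qed

lemma chebyshev_U_factorization:
  "chebyshev_U m = smult (2 ^ m) (\<Prod>k=1..m. [:- cos (pi * real k / real (m + 1)), 1:])"
  (is "_ = smult _ ?p")
proof -
  let ?nodes = "(\<lambda>k. cos (pi * real k / real (m + 1))) ` {1..m}"
  have deg_p: "degree ?p = m"
    by (subst degree_prod_eq_sum_degree) auto
  have "lead_coeff ?p = 1"
    by (simp add: lead_coeff_prod)
  show ?thesis
  proof (rule poly_eqI_degree_lead_coeff[of _ m _ ?nodes])
    show "m \<le> card ?nodes"
      using card_image[OF inj_on_cos_chebyshev_nodes] by simp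
    show "degree (chebyshev_U m :: real poly) \<le> m"
      by (rule degree_chebyshev_U_le)
    show "degree (smult (2 ^ m) ?p) \<le> m"
      using deg_p by simp
    show "coeff (chebyshev_U m) m = coeff (smult (2 ^ m) ?p) m"
      using \<open>lead_coeff ?p = 1\<close> deg_p by (simp add: coeff_chebyshev_U_top)
  next
    fix z assume "z \<in> ?nodes"
    then obtain k where k: "k \<in> {1..m}" and z: "z = cos (pi * real k / real (m + 1))"
      by auto
    have "poly (chebyshev_U m) z = 0"
      unfolding z by (rule chebyshev_U_root[OF k])
    moreover have "poly ?p z = 0"
      using k z by (auto simp: poly_prod intro!: prod_zero)
    ultimately show "poly (chebyshev_U m) z = poly (smult (2 ^ m) ?p) z"
      by simp
  qed
qed

lemma sinh_mult_div_sinh_eq_prod: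
  assumes "a \<noteq> 0"
  shows "sinh (real (m + 1) * a) / sinh a
       = 2 ^ m * (\<Prod>k=1..m. cosh a - cos (pi * real k / real (m + 1)))"
proof -
  have "sinh (real (m + 1) * a) / sinh a = poly (chebyshev_U m) (cosh a)"
    using chebyshev_U_cosh[of m a] assms by (simp add: field_simps)
  also have "\<dots> = 2 ^ m * (\<Prod>k=1..m. cosh a - cos (pi * real k / real (m + 1)))"
    by (subst chebyshev_U_factorization) (simp add: poly_prod)
  finally show ?thesis .
qed

lemma prod_sinh_mult_div_sinh_eq_double_prod:
  assumes "\<And>j. j \<in> {1..n} \<Longrightarrow> \<alpha> j \<noteq> 0 \<and> cosh (\<alpha> j) = x - cos (pi * real j / real (n + 1))"
  shows "(\<Prod>j=1..n. sinh (real (m + 1) * \<alpha> j) / sinh (\<alpha> j))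
       = 2 ^ (m * n) * (\<Prod>j=1..n. \<Prod>k=1..m.
            x - cos (pi * real j / real (n + 1)) - cos (pi * real k / real (m + 1)))"
proof -
  have "(\<Prod>j=1..n. sinh (real (m + 1) * \<alpha> j) / sinh (\<alpha> j))
      = (\<Prod>j=1..n. 2 ^ m * (\<Prod>k=1..m.
            x - cos (pi * real j / real (n + 1)) - cos (pi * real k / real (m + 1))))"
  proof (rule prod.cong)
    fix j assume j: "j \<in> {1..n}"
    then have "sinh (real (m + 1) * \<alpha> j) / sinh (\<alpha> j)
        = 2 ^ m * (\<Prod>k=1..m. cosh (\<alpha> j) - cos (pi * real k / real (m + 1)))"
      using assms by (intro sinh_mult_div_sinh_eq_prod) blast
    then show "sinh (real (m + 1) * \<alpha> j) / sinh (\<alpha> j) = 2 ^ m * (\<Prod>k=1..m.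
            x - cos (pi * real j / real (n + 1)) - cos (pi * real k / real (m + 1)))"
      using assms j by simp
  qed simp
  then show ?thesis
    by (simp add: prod.distrib power_mult)
qed

theorem mainTheorem11:
  fixes m n :: nat and x :: real and \<alpha> \<beta> :: "nat \<Rightarrow> real"
  assumes "m \<ge> 1" and "n \<ge> 1" and "x > 2"
    and "\<And>j. 1 \<le> j \<Longrightarrow> j \<le> n \<Longrightarrow> \<alpha> j > 0 \<and> cosh (\<alpha> j) + cos (pi * real j / real (n + 1)) = x"
    and "\<And>k. 1 \<le> k \<Longrightarrow> k \<le> m \<Longrightarrow> \<beta> k > 0 \<and> cosh (\<beta> k) + cos (pi * real k / real (m + 1)) = x"
  shows "(\<Prod>j=1..n. sinh (real (m + 1) * \<alpha> j) / sinh (\<alpha> j))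
       = (\<Prod>k=1..m. sinh (real (n + 1) * \<beta> k) / sinh (\<beta> k))"
proof -
  have "(\<Prod>j=1..n. sinh (real (m + 1) * \<alpha> j) / sinh (\<alpha> j))
      = 2 ^ (m * n) * (\<Prod>j=1..n. \<Prod>k=1..m.
            x - cos (pi * real j / real (n + 1)) - cos (pi * real k / real (m + 1)))"
    using assms(4) by (intro prod_sinh_mult_div_sinh_eq_double_prod) force
  also have "\<dots> = 2 ^ (n * m) * (\<Prod>k=1..m. \<Prod>j=1..n.
            x - cos (pi * real k / real (m + 1)) - cos (pi * real j / real (n + 1)))"
    by (subst prod.swap) (simp add: algebra_simps)
  also have "\<dots> = (\<Prod>k=1..m. sinh (real (n + 1) * \<beta> k) / sinh (\<beta> k))"
    using assms(5) by (intro prod_sinh_mult_div_sinh_eq_double_prod[symmetric]) force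
  finally show ?thesis .
qed

end
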